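(* Let $n$ be an integer and let $V$ be a finite dimensional graded vector space concentrated in degrees $\geq2$. Let $\gamma\in\mathrm{GC}_{V,n}$ be a graph of loop order $g$ with $D$ decorations in $V^*$. Then the cohomological degree of $\gamma$ satisfies \[|\gamma|\leq-(n-3)(g-1)-D+1.\] In particular, if $n\geq4$ and $g\geq1$ then $|\gamma|\leq0$.
   Context: $\mathrm{GC}_{V,n}$ is spanned by connected graphs without hairs, with $v\ge1$ vertices and $e$ edges (loop order $g=e-v+1$), each vertex carrying a (possibly empty) monomial of decorations from $V^*$ (an element of $(V^k)^*$ having degree $-k$), such that every vertex is at least trivalent where each decoration at it counts $+1$ to its valence. The cohomological degree of such a graph in $\mathrm{GC}_{V,n}$ is $|\gamma|=nv-(n-1)e+(\text{total degree of the decorations})+1$. *)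

theory Defs
  imports Main "HOL-Library.Multiset"
begin

text \<open>A finite dimensional graded vector space V is recorded by its graded dimension
  dimV k = dim V^k.  A decoration from V^* that is an element of (V^k)^* has degree -k,
  so a decoration is recorded by the integer k (with V^k nonzero).\<close>

definition fin_graded_dim :: "(int \<Rightarrow> nat) \<Rightarrow> bool" where
  "fin_graded_dim dimV \<longleftrightarrow> finite {k. dimV k \<noteq> 0}"

definition concentrated_ge2 :: "(int \<Rightarrow> nat) \<Rightarrow> bool" where
  "concentrated_ge2 dimV \<longleftrightarrow> (\<forall>k. k < 2 \<longrightarrow> dimV k = 0)"

text \<open>A decorated graph: vertices 0..<v, a multiset E of edges (multigraph, loops allowed,
  each edge given by its two endpoints), and at each vertex i a multiset dec i of
  decoration degrees k (each decoration lies in (V^k)^*).\<close>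

definition edge_rel :: "(nat \<times> nat) multiset \<Rightarrow> (nat \<times> nat) set" where
  "edge_rel E = {(a,b). (a,b) \<in># E \<or> (b,a) \<in># E}"

definition valence :: "(nat \<times> nat) multiset \<Rightarrow> (nat \<Rightarrow> int multiset) \<Rightarrow> nat \<Rightarrow> nat" where
  "valence E dec i = size (filter_mset (\<lambda>(a,b). a = i) E)
                    + size (filter_mset (\<lambda>(a,b). b = i) E) + size (dec i)"

definition is_GC_graph ::
  "(int \<Rightarrow> nat) \<Rightarrow> nat \<Rightarrow> (nat \<times> nat) multiset \<Rightarrow> (nat \<Rightarrow> int multiset) \<Rightarrow> bool" where
  "is_GC_graph dimV v E dec \<longleftrightarrow>
     v \<ge> 1
   \<and> (\<forall>(a,b) \<in> set_mset E. a < v \<and> b < v)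
   \<and> (\<forall>i < v. (0, i) \<in> (edge_rel E)\<^sup>*)
   \<and> (\<forall>i. i \<ge> v \<longrightarrow> dec i = {#})
   \<and> (\<forall>i < v. \<forall>k \<in># dec i. dimV k \<noteq> 0)
   \<and> (\<forall>i < v. valence E dec i \<ge> 3)"

definition loop_order :: "nat \<Rightarrow> (nat \<times> nat) multiset \<Rightarrow> int" where
  "loop_order v E = int (size E) - int v + 1"

definition num_decorations :: "nat \<Rightarrow> (nat \<Rightarrow> int multiset) \<Rightarrow> nat" where
  "num_decorations v dec = (\<Sum>i<v. size (dec i))"

definition deco_degree :: "nat \<Rightarrow> (nat \<Rightarrow> int multiset) \<Rightarrow> int" where
  "deco_degree v dec = (\<Sum>i<v. \<Sum>k\<in>#dec i. - k)"

definition GC_degree :: "int \<Rightarrow> nat \<Rightarrow> (nat \<times> nat) multiset \<Rightarrow> (nat \<Rightarrow> int multiset) \<Rightarrow> int" where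
  "GC_degree n v E dec = n * int v - (n - 1) * int (size E) + deco_degree v dec + 1"

end

theory Submission
  imports Defs
begin

text \<open>Counting half-edges and decorations vertex by vertex gives the handshake identity
  \<open>\<Sum> valence = 2e + D\<close>, so trivalence yields \<open>3v \<le> 2e + D\<close>. Each decoration has degree
  at most \<open>-2\<close>, so \<open>|\<gamma>| \<le> nv - (n - 1)e - 2D + 1\<close>, and this falls short of the claimed bound
  by exactly \<open>2e + D - 3v \<ge> 0\<close>. For the second claim, either \<open>g \<ge> 2\<close>, or \<open>g = 1\<close>, i.e.
  \<open>e = v\<close>, and then \<open>D \<ge> v \<ge> 1\<close>.\<close>

lemma sum_size_filter_mset_fibres:
  assumes "finite A" and "f ` set_mset M \<subseteq> A"
  shows "(\<Sum>i\<in>A. size {# x \<in># M. f x = i #}) = size M"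
  using assms(2)
proof (induction M)
  case empty
  then show ?case by simp
next
  case (add x M)
  have "(\<Sum>i\<in>A. size {# y \<in># add_mset x M. f y = i #})
      = (\<Sum>i\<in>A. (if f x = i then 1 else 0) + size {# y \<in># M. f y = i #})"
    by (rule sum.cong) auto
  also have "\<dots> = (\<Sum>i\<in>A. if f x = i then 1 else 0) + size M"
    using add by (simp add: sum.distrib)
  also have "(\<Sum>i\<in>A. if f x = i then 1 else 0) = (1::nat)"
    using add.prems assms(1) by simp
  finally show ?case by simp
qed

lemma sum_valence:
  assumes "\<forall>(a, b) \<in> set_mset E. a < v \<and> b < v"
  shows "(\<Sum>i<v. valence E dec i) = 2 * size E + num_decorations v dec"
proof -
  have "(\<Sum>i<v. size {# e \<in># E. fst e = i #}) = size E"
    and "(\<Sum>i<v. size {# e \<in># E. snd e = i #}) = size E"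
    using assms by (auto intro!: sum_size_filter_mset_fibres)
  then show ?thesis
    by (simp add: valence_def num_decorations_def sum.distrib case_prod_beta')
qed

lemma three_vertices_le_half_edges:
  assumes "is_GC_graph dimV v E dec"
  shows "3 * v \<le> 2 * size E + num_decorations v dec"
proof -
  have "(\<Sum>i<v. 3) \<le> (\<Sum>i<v. valence E dec i)"
    using assms by (intro sum_mono) (auto simp: is_GC_graph_def)
  also have "\<dots> = 2 * size E + num_decorations v dec"
    using assms by (intro sum_valence) (auto simp: is_GC_graph_def)
  finally show ?thesis by simp
qed

lemma sum_mset_le_size_mult:
  fixes f :: "'a \<Rightarrow> 'b::ordered_semiring_1"
  assumes "\<forall>k \<in># M. f k \<le> c"
  shows "(\<Sum>k\<in>#M. f k) \<le> of_nat (size M) * c"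
  using sum_mset_mono[of M f "\<lambda>_. c"] assms by simp

lemma deco_degree_le:
  assumes "concentrated_ge2 dimV" and "is_GC_graph dimV v E dec"
  shows "deco_degree v dec \<le> - 2 * int (num_decorations v dec)"
proof -
  have "(\<Sum>k\<in>#dec i. - k) \<le> int (size (dec i)) * - 2" if "i < v" for i
  proof (rule sum_mset_le_size_mult)
    show "\<forall>k\<in>#dec i. - k \<le> - 2"
      using assms that unfolding concentrated_ge2_def is_GC_graph_def by (meson neg_le_iff_le not_le)
  qed
  then have "deco_degree v dec \<le> (\<Sum>i<v. int (size (dec i)) * - 2)"
    unfolding deco_degree_def by (intro sum_mono) simp
  then show ?thesis
    by (simp add: num_decorations_def sum_distrib_left sum_negf mult.commute)
qed

lemma GC_degree_eq:
  "GC_degree n v E dec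
     = - (n - 3) * (loop_order v E - 1) - int (num_decorations v dec) + 1
       - (2 * int (size E) + int (num_decorations v dec) - 3 * int v)
       + (deco_degree v dec + 2 * int (num_decorations v dec))"
  by (simp add: GC_degree_def loop_order_def algebra_simps)

theorem lemma13p5:
  fixes n :: int and dimV :: "int \<Rightarrow> nat" and v :: nat
    and E :: "(nat \<times> nat) multiset" and dec :: "nat \<Rightarrow> int multiset"
  assumes "fin_graded_dim dimV" and "concentrated_ge2 dimV"
    and "is_GC_graph dimV v E dec"
  shows "GC_degree n v E dec
           \<le> - (n - 3) * (loop_order v E - 1) - int (num_decorations v dec) + 1
         \<and> (n \<ge> 4 \<and> loop_order v E \<ge> 1 \<longrightarrow> GC_degree n v E dec \<le> 0)"
proof -
  let ?g = "loop_order v E" and ?D = "int (num_decorations v dec)"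
  have trivalent: "3 * int v \<le> 2 * int (size E) + ?D"
    using three_vertices_le_half_edges[OF assms(3)] by linarith
  have bound: "GC_degree n v E dec \<le> - (n - 3) * (?g - 1) - ?D + 1"
    using GC_degree_eq[of n v E dec] trivalent deco_degree_le[OF assms(2,3)] by linarith
  moreover have "GC_degree n v E dec \<le> 0" if "n \<ge> 4" and "?g \<ge> 1"
  proof (cases "?g = 1")
    case True
    then have "?D \<ge> 1"
      using trivalent assms(3) by (simp add: loop_order_def is_GC_graph_def)
    then show ?thesis using bound True by simp
  next
    case False
    then have "(n - 3) * (?g - 1) \<ge> 1"
      using that mult_mono[of 1 "n - 3" 1 "?g - 1"] by simp
    then show ?thesis using bound by linarith
  qed
  ultimately show ?thesis by blast
qed

end
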